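(* For a right $R$-module $M$, the following are equivalent: (1) $M$ is injective; (2) $M$ is pseudo principally $N$-injective for every right $R$-module $N$.
   Context: All rings are associative with identity and all modules are unitary right $R$-modules. A submodule $A$ of $N$ is $N$-cyclic if $A\cong N/L$ for some submodule $L$ of $N$ (equivalently, $A$ is the image of an endomorphism of $N$). $M$ is pseudo principally $N$-injective if for every $N$-cyclic submodule $A$ of $N$, every $R$-monomorphism $A\to M$ extends to an $R$-homomorphism $N\to M$. *)

theory Defs
  imports "HOL-Algebra.Ring"
begin

text \<open>Right R-modules: an additive abelian group (the additive part of a ring record)
  together with a right action of the ring R.\<close>

record ('r, 'm) rmod = "'m ring" +
  ract :: "'m \<Rightarrow> 'r \<Rightarrow> 'm"

definition right_module :: "('r, 'c) ring_scheme \<Rightarrow> ('r, 'm) rmod \<Rightarrow> bool" where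
  "right_module R M \<longleftrightarrow>
     ring R \<and> abelian_group M \<and>
     (\<forall>x\<in>carrier M. \<forall>r\<in>carrier R. ract M x r \<in> carrier M) \<and>
     (\<forall>x\<in>carrier M. \<forall>y\<in>carrier M. \<forall>r\<in>carrier R.
        ract M (x \<oplus>\<^bsub>M\<^esub> y) r = ract M x r \<oplus>\<^bsub>M\<^esub> ract M y r) \<and>
     (\<forall>x\<in>carrier M. \<forall>r\<in>carrier R. \<forall>s\<in>carrier R.
        ract M x (r \<oplus>\<^bsub>R\<^esub> s) = ract M x r \<oplus>\<^bsub>M\<^esub> ract M x s) \<and>
     (\<forall>x\<in>carrier M. \<forall>r\<in>carrier R. \<forall>s\<in>carrier R.
        ract M x (r \<otimes>\<^bsub>R\<^esub> s) = ract M (ract M x r) s) \<and>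
     (\<forall>x\<in>carrier M. ract M x \<one>\<^bsub>R\<^esub> = x)"

definition right_submodule :: "('r, 'c) ring_scheme \<Rightarrow> 'm set \<Rightarrow> ('r, 'm) rmod \<Rightarrow> bool" where
  "right_submodule R A M \<longleftrightarrow>
     A \<subseteq> carrier M \<and> \<zero>\<^bsub>M\<^esub> \<in> A \<and>
     (\<forall>x\<in>A. \<forall>y\<in>A. x \<oplus>\<^bsub>M\<^esub> y \<in> A) \<and>
     (\<forall>x\<in>A. \<ominus>\<^bsub>M\<^esub> x \<in> A) \<and>
     (\<forall>x\<in>A. \<forall>r\<in>carrier R. ract M x r \<in> A)"

definition rlin_on :: "('r, 'c) ring_scheme \<Rightarrow> 'n set \<Rightarrow> ('r, 'n) rmod \<Rightarrow> ('r, 'm) rmod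
    \<Rightarrow> ('n \<Rightarrow> 'm) \<Rightarrow> bool" where
  "rlin_on R A N M f \<longleftrightarrow>
     (\<forall>x\<in>A. f x \<in> carrier M) \<and>
     (\<forall>x\<in>A. \<forall>y\<in>A. f (x \<oplus>\<^bsub>N\<^esub> y) = f x \<oplus>\<^bsub>M\<^esub> f y) \<and>
     (\<forall>x\<in>A. \<forall>r\<in>carrier R. f (ract N x r) = ract M (f x) r)"

definition rhom :: "('r, 'c) ring_scheme \<Rightarrow> ('r, 'n) rmod \<Rightarrow> ('r, 'm) rmod
    \<Rightarrow> ('n \<Rightarrow> 'm) \<Rightarrow> bool" where
  "rhom R N M f \<longleftrightarrow> rlin_on R (carrier N) N M f"

definition N_cyclic :: "('r, 'c) ring_scheme \<Rightarrow> 'n set \<Rightarrow> ('r, 'n) rmod \<Rightarrow> bool" where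
  "N_cyclic R A N \<longleftrightarrow> (\<exists>g. rhom R N N g \<and> A = g ` carrier N)"

definition pseudo_principally_injective ::
    "('r, 'c) ring_scheme \<Rightarrow> ('r, 'm) rmod \<Rightarrow> ('r, 'n) rmod \<Rightarrow> bool" where
  "pseudo_principally_injective R M N \<longleftrightarrow>
     (\<forall>A. right_submodule R A N \<and> N_cyclic R A N \<longrightarrow>
        (\<forall>f. rlin_on R A N M f \<and> inj_on f A \<longrightarrow>
           (\<exists>h. rhom R N M h \<and> (\<forall>x\<in>A. h x = f x))))"

definition ppi_all :: "('r, 'c) ring_scheme \<Rightarrow> ('r, 'm) rmod \<Rightarrow> 'n itself \<Rightarrow> bool" where
  "ppi_all R M _ \<longleftrightarrow>
     (\<forall>N :: ('r, 'n) rmod. right_module R N \<longrightarrow> pseudo_principally_injective R M N)"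

definition injective_mod :: "('r, 'c) ring_scheme \<Rightarrow> ('r, 'm) rmod \<Rightarrow> 'b itself \<Rightarrow> bool" where
  "injective_mod R M _ \<longleftrightarrow>
     (\<forall>B :: ('r, 'b) rmod. right_module R B \<longrightarrow>
        (\<forall>A. right_submodule R A B \<longrightarrow>
           (\<forall>f. rlin_on R A B M f \<longrightarrow>
              (\<exists>h. rhom R B M h \<and> (\<forall>x\<in>A. h x = f x)))))"

end

theory Submission
  imports Defs "HOL-Algebra.AbelCoset"
begin

text \<open>Conversely, let
  \<open>f : A \<rightarrow> M\<close> be linear on a submodule \<open>A\<close> of \<open>B\<close>. In the pushout
  \<open>P = (M \<oplus> B) / {(f a, -a) | a \<in> A}\<close> the module \<open>M\<close> embeds by \<open>\<iota> m = [(m, 0)]\<close>,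
  and \<open>j b = [(0, b)]\<close> extends \<open>\<iota> \<circ> f\<close>. The endomorphism \<open>(m, p) \<mapsto> (0, \<iota> m)\<close> of
  \<open>M \<oplus> P\<close> has image \<open>0 \<oplus> \<iota> M \<cong> M\<close>, so pseudo principal \<open>(M \<oplus> P)\<close>-injectivity extends
  the inverse of this isomorphism to \<open>M \<oplus> P\<close>; restricted to \<open>0 \<oplus> P\<close> it is a retraction
  \<open>\<rho>\<close> of \<open>\<iota>\<close>, and \<open>\<rho> \<circ> j\<close> extends \<open>f\<close>.\<close>

lemma right_module_abelian_group: "right_module R M \<Longrightarrow> abelian_group M"
  by (simp add: right_module_def)

lemma ract_closed:
  "right_module R M \<Longrightarrow> x \<in> carrier M \<Longrightarrow> r \<in> carrier R \<Longrightarrow> ract M x r \<in> carrier M"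
  by (simp add: right_module_def)

lemma ract_add:
  "right_module R M \<Longrightarrow> x \<in> carrier M \<Longrightarrow> y \<in> carrier M \<Longrightarrow> r \<in> carrier R \<Longrightarrow>
   ract M (x \<oplus>\<^bsub>M\<^esub> y) r = ract M x r \<oplus>\<^bsub>M\<^esub> ract M y r"
  by (simp add: right_module_def)

lemma ract_zero:
  assumes "right_module R M" "r \<in> carrier R"
  shows "ract M \<zero>\<^bsub>M\<^esub> r = \<zero>\<^bsub>M\<^esub>"
proof -
  interpret abelian_group M using assms(1) by (rule right_module_abelian_group)
  have "ract M \<zero>\<^bsub>M\<^esub> r \<oplus>\<^bsub>M\<^esub> ract M \<zero>\<^bsub>M\<^esub> r = ract M \<zero>\<^bsub>M\<^esub> r"
    using ract_add[OF assms(1) _ _ assms(2)] by (metis l_zero zero_closed)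
  then show ?thesis
    by (metis add.l_cancel_one assms ract_closed zero_closed)
qed

lemma ract_neg:
  assumes "right_module R M" "x \<in> carrier M" "r \<in> carrier R"
  shows "ract M (\<ominus>\<^bsub>M\<^esub> x) r = \<ominus>\<^bsub>M\<^esub> ract M x r"
proof -
  interpret abelian_group M using assms(1) by (rule right_module_abelian_group)
  have "ract M (\<ominus>\<^bsub>M\<^esub> x) r \<oplus>\<^bsub>M\<^esub> ract M x r = \<zero>\<^bsub>M\<^esub>"
    using assms by (metis a_inv_closed l_neg ract_add ract_zero)
  then show ?thesis
    using assms by (metis a_inv_closed minus_equality ract_closed)
qed

lemma rlin_on_zero:
  assumes "abelian_group N" "abelian_group M" "rlin_on R A N M f" "\<zero>\<^bsub>N\<^esub> \<in> A"
  shows "f \<zero>\<^bsub>N\<^esub> = \<zero>\<^bsub>M\<^esub>"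
proof -
  interpret N: abelian_group N by fact
  interpret M: abelian_group M by fact
  have "f \<zero>\<^bsub>N\<^esub> \<oplus>\<^bsub>M\<^esub> f \<zero>\<^bsub>N\<^esub> = f \<zero>\<^bsub>N\<^esub>" "f \<zero>\<^bsub>N\<^esub> \<in> carrier M"
    using assms(3,4) unfolding rlin_on_def by (metis N.l_zero N.zero_closed)+
  then show ?thesis by (metis M.add.l_cancel_one M.zero_closed)
qed

lemma rlin_on_neg:
  assumes "abelian_group N" "abelian_group M" "rlin_on R A N M f" "A \<subseteq> carrier N"
    and "\<zero>\<^bsub>N\<^esub> \<in> A" "x \<in> A" "\<ominus>\<^bsub>N\<^esub> x \<in> A"
  shows "f (\<ominus>\<^bsub>N\<^esub> x) = \<ominus>\<^bsub>M\<^esub> f x"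
proof -
  interpret N: abelian_group N by fact
  interpret M: abelian_group M by fact
  have "f (\<ominus>\<^bsub>N\<^esub> x) \<oplus>\<^bsub>M\<^esub> f x = f \<zero>\<^bsub>N\<^esub>"
    using assms(3-7) unfolding rlin_on_def by (metis N.l_neg subsetD)
  also have "\<dots> = \<zero>\<^bsub>M\<^esub>" using rlin_on_zero assms(1-3,5) .
  finally show ?thesis
    using assms(3,6,7) unfolding rlin_on_def by (metis M.minus_equality)
qed

lemma rhom_comp: "rhom R N P g \<Longrightarrow> rhom R P M h \<Longrightarrow> rhom R N M (h \<circ> g)"
  by (simp add: rhom_def rlin_on_def)

lemma rhom_image_submodule:
  assumes N: "right_module R N" and M: "right_module R M" and g: "rhom R N M g"
  shows "right_submodule R (g ` carrier N) M"
proof -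
  interpret N: abelian_group N using N by (rule right_module_abelian_group)
  interpret M: abelian_group M using M by (rule right_module_abelian_group)
  have l: "rlin_on R (carrier N) N M g" using g by (simp add: rhom_def)
  have "g \<zero>\<^bsub>N\<^esub> = \<zero>\<^bsub>M\<^esub>"
    using rlin_on_zero[OF N.abelian_group_axioms M.abelian_group_axioms l] by simp
  moreover have "\<And>x. x \<in> carrier N \<Longrightarrow> g (\<ominus>\<^bsub>N\<^esub> x) = \<ominus>\<^bsub>M\<^esub> g x"
    using rlin_on_neg[OF N.abelian_group_axioms M.abelian_group_axioms l] by simp
  ultimately show ?thesis
    using l ract_closed[OF N] unfolding right_submodule_def rlin_on_def
    by (auto simp: image_iff) (metis N.zero_closed, metis N.a_closed, metis N.a_inv_closed, metis)
qed

definition dsum :: "('r, 'x) rmod \<Rightarrow> ('r, 'y) rmod \<Rightarrow> ('r, 'x \<times> 'y) rmod" where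
  "dsum N1 N2 =
     \<lparr>carrier = carrier N1 \<times> carrier N2, mult = (\<lambda>_ _. undefined), one = undefined,
      zero = (\<zero>\<^bsub>N1\<^esub>, \<zero>\<^bsub>N2\<^esub>),
      add = (\<lambda>x y. (fst x \<oplus>\<^bsub>N1\<^esub> fst y, snd x \<oplus>\<^bsub>N2\<^esub> snd y)),
      ract = (\<lambda>x r. (ract N1 (fst x) r, ract N2 (snd x) r))\<rparr>"

lemma dsum_simps [simp]:
  "carrier (dsum N1 N2) = carrier N1 \<times> carrier N2"
  "\<zero>\<^bsub>dsum N1 N2\<^esub> = (\<zero>\<^bsub>N1\<^esub>, \<zero>\<^bsub>N2\<^esub>)"
  "(a, b) \<oplus>\<^bsub>dsum N1 N2\<^esub> (c, d) = (a \<oplus>\<^bsub>N1\<^esub> c, b \<oplus>\<^bsub>N2\<^esub> d)"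
  "ract (dsum N1 N2) (a, b) r = (ract N1 a r, ract N2 b r)"
  by (simp_all add: dsum_def)

lemma dsum_module:
  assumes "right_module R N1" "right_module R N2"
  shows "right_module R (dsum N1 N2)"
proof -
  interpret N1: abelian_group N1 using assms(1) by (rule right_module_abelian_group)
  interpret N2: abelian_group N2 using assms(2) by (rule right_module_abelian_group)
  have "abelian_group (dsum N1 N2)"
  proof (rule abelian_groupI, goal_cases)
    case (6 x)
    then show ?case
      by (auto intro!: bexI[of _ "(\<ominus>\<^bsub>N1\<^esub> fst x, \<ominus>\<^bsub>N2\<^esub> snd x)"] N1.l_neg N2.l_neg)
  qed (auto simp: N1.a_ac N2.a_ac)
  then show ?thesis
    using assms unfolding right_module_def by auto
qed

lemma dsum_neg:
  assumes "right_module R N1" "right_module R N2" "x \<in> carrier N1" "y \<in> carrier N2"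
  shows "\<ominus>\<^bsub>dsum N1 N2\<^esub> (x, y) = (\<ominus>\<^bsub>N1\<^esub> x, \<ominus>\<^bsub>N2\<^esub> y)"
proof -
  interpret N1: abelian_group N1 using assms(1) by (rule right_module_abelian_group)
  interpret N2: abelian_group N2 using assms(2) by (rule right_module_abelian_group)
  interpret abelian_group "dsum N1 N2"
    using dsum_module[OF assms(1,2)] by (rule right_module_abelian_group)
  show ?thesis
    using assms by (intro minus_equality) (auto simp: N1.l_neg N2.l_neg)
qed

lemma dsum_inl_rhom:
  assumes "right_module R N1" "right_module R N2"
  shows "rhom R N1 (dsum N1 N2) (\<lambda>x. (x, \<zero>\<^bsub>N2\<^esub>))"
proof -
  interpret N2: abelian_group N2 using assms(2) by (rule right_module_abelian_group)
  show ?thesis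
    using assms by (simp add: rhom_def rlin_on_def ract_closed ract_zero)
qed

lemma dsum_inr_rhom:
  assumes "right_module R N1" "right_module R N2"
  shows "rhom R N2 (dsum N1 N2) (\<lambda>y. (\<zero>\<^bsub>N1\<^esub>, y))"
proof -
  interpret N1: abelian_group N1 using assms(1) by (rule right_module_abelian_group)
  show ?thesis
    using assms by (simp add: rhom_def rlin_on_def ract_closed ract_zero)
qed

definition quotient_mod :: "('r, 'x) rmod \<Rightarrow> 'x set \<Rightarrow> ('r, 'x set) rmod" where
  "quotient_mod Q K =
     \<lparr>carrier = (\<lambda>q. K +>\<^bsub>Q\<^esub> q) ` carrier Q, mult = (\<lambda>_ _. undefined), one = undefined,
      zero = K, add = set_add Q,
      ract = (\<lambda>X r. K +>\<^bsub>Q\<^esub> ract Q (SOME q. q \<in> X) r)\<rparr>"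

locale submodule_quotient =
  fixes R :: "('r, 'c) ring_scheme" and Q :: "('r, 'x) rmod" and K :: "'x set"
  assumes module: "right_module R Q" and submodule: "right_submodule R K Q"
begin

sublocale abelian_subgroup K Q
proof (rule abelian_subgroupI3)
  show "abelian_group Q" using module by (rule right_module_abelian_group)
  then interpret abelian_group Q .
  show "additive_subgroup K Q"
    using submodule unfolding right_submodule_def
    by (intro additive_subgroupI subgroup.intro) (auto simp: a_inv_def[symmetric])
qed

lemma coset_eq_iff:
  assumes "q \<in> carrier Q" "q' \<in> carrier Q"
  shows "K +>\<^bsub>Q\<^esub> q = K +>\<^bsub>Q\<^esub> q' \<longleftrightarrow> q \<oplus>\<^bsub>Q\<^esub> \<ominus>\<^bsub>Q\<^esub> q' \<in> K"
  using assms a_rcos_module a_rcos_self a_repr_independence' by metis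

lemma quotient_carrier [simp]: "carrier (quotient_mod Q K) = (\<lambda>q. K +>\<^bsub>Q\<^esub> q) ` carrier Q"
  by (simp add: quotient_mod_def)

lemma quotient_zero: "\<zero>\<^bsub>quotient_mod Q K\<^esub> = K +>\<^bsub>Q\<^esub> \<zero>\<^bsub>Q\<^esub>"
  by (simp add: quotient_mod_def a_subset)

lemma quotient_add:
  "q \<in> carrier Q \<Longrightarrow> p \<in> carrier Q \<Longrightarrow>
   (K +>\<^bsub>Q\<^esub> q) \<oplus>\<^bsub>quotient_mod Q K\<^esub> (K +>\<^bsub>Q\<^esub> p) = K +>\<^bsub>Q\<^esub> (q \<oplus>\<^bsub>Q\<^esub> p)"
  by (simp add: quotient_mod_def a_rcos_sum)

lemma quotient_ract:
  assumes q: "q \<in> carrier Q" and r: "r \<in> carrier R"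
  shows "ract (quotient_mod Q K) (K +>\<^bsub>Q\<^esub> q) r = K +>\<^bsub>Q\<^esub> ract Q q r"
proof -
  define p where "p = (SOME p. p \<in> K +>\<^bsub>Q\<^esub> q)"
  have "p \<in> K +>\<^bsub>Q\<^esub> q"
    unfolding p_def using a_rcos_self[OF q] by (rule someI)
  then have p: "p \<in> carrier Q" "p \<oplus>\<^bsub>Q\<^esub> \<ominus>\<^bsub>Q\<^esub> q \<in> K"
    using q a_elemrcos_carrier a_rcos_module_imp by auto
  have "ract Q p r \<oplus>\<^bsub>Q\<^esub> \<ominus>\<^bsub>Q\<^esub> ract Q q r = ract Q (p \<oplus>\<^bsub>Q\<^esub> \<ominus>\<^bsub>Q\<^esub> q) r"
    using p q r by (simp add: ract_add[OF module] ract_neg[OF module])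
  also have "\<dots> \<in> K"
    using submodule p(2) r unfolding right_submodule_def by blast
  finally have "K +>\<^bsub>Q\<^esub> ract Q p r = K +>\<^bsub>Q\<^esub> ract Q q r"
    using p q r by (simp add: coset_eq_iff ract_closed[OF module])
  then show ?thesis
    by (simp add: quotient_mod_def p_def)
qed

lemma quotient_module: "right_module R (quotient_mod Q K)"
proof -
  have "abelian_group (quotient_mod Q K)"
  proof (rule abelian_groupI, goal_cases)
    case 2
    show ?case by (simp add: quotient_zero)
  next
    case (5 x)
    then show ?case by (auto simp: quotient_zero quotient_add)
  next
    case (6 x)
    then obtain q where "q \<in> carrier Q" "x = K +>\<^bsub>Q\<^esub> q" by auto
    then show ?case
      by (simp add: quotient_add quotient_zero) (metis a_inv_closed l_neg)
  qed (auto simp: quotient_add a_ac)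
  then show ?thesis
    using module unfolding right_module_def
    by (auto simp: quotient_add quotient_ract ring.ring_simprules)
qed

lemma quotient_projection_rhom: "rhom R Q (quotient_mod Q K) (\<lambda>q. K +>\<^bsub>Q\<^esub> q)"
  unfolding rhom_def rlin_on_def
  by (simp add: quotient_add quotient_ract)

end

lemma neg_graph_submodule:
  assumes M: "right_module R M" and B: "right_module R B"
    and A: "right_submodule R A B" and f: "rlin_on R A B M f"
  shows "right_submodule R ((\<lambda>a. (f a, \<ominus>\<^bsub>B\<^esub> a)) ` A) (dsum M B)"
proof -
  interpret M: abelian_group M using M by (rule right_module_abelian_group)
  interpret B: abelian_group B using B by (rule right_module_abelian_group)
  have A_sub: "A \<subseteq> carrier B" "\<zero>\<^bsub>B\<^esub> \<in> A" "\<And>x y. x \<in> A \<Longrightarrow> y \<in> A \<Longrightarrow> x \<oplus>\<^bsub>B\<^esub> y \<in> A"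
    "\<And>x. x \<in> A \<Longrightarrow> \<ominus>\<^bsub>B\<^esub> x \<in> A" "\<And>x r. x \<in> A \<Longrightarrow> r \<in> carrier R \<Longrightarrow> ract B x r \<in> A"
    using A unfolding right_submodule_def by auto
  have f_lin: "\<And>x. x \<in> A \<Longrightarrow> f x \<in> carrier M"
    "\<And>x y. x \<in> A \<Longrightarrow> y \<in> A \<Longrightarrow> f (x \<oplus>\<^bsub>B\<^esub> y) = f x \<oplus>\<^bsub>M\<^esub> f y"
    "\<And>x r. x \<in> A \<Longrightarrow> r \<in> carrier R \<Longrightarrow> f (ract B x r) = ract M (f x) r"
    using f unfolding rlin_on_def by auto
  have f_zero: "f \<zero>\<^bsub>B\<^esub> = \<zero>\<^bsub>M\<^esub>"
    using rlin_on_zero[OF B.abelian_group_axioms M.abelian_group_axioms f A_sub(2)] .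
  have f_neg: "\<And>x. x \<in> A \<Longrightarrow> f (\<ominus>\<^bsub>B\<^esub> x) = \<ominus>\<^bsub>M\<^esub> f x"
    using rlin_on_neg[OF B.abelian_group_axioms M.abelian_group_axioms f A_sub(1,2)] A_sub(4) by blast
  have B_neg_zero: "\<ominus>\<^bsub>B\<^esub> \<zero>\<^bsub>B\<^esub> = \<zero>\<^bsub>B\<^esub>"
    by (metis B.l_neg B.r_zero B.a_inv_closed B.zero_closed)
  show ?thesis
    unfolding right_submodule_def
  proof (intro conjI ballI)
    fix x assume "x \<in> (\<lambda>a. (f a, \<ominus>\<^bsub>B\<^esub> a)) ` A"
    then obtain a where a: "a \<in> A" "x = (f a, \<ominus>\<^bsub>B\<^esub> a)" by blast
    have aB: "a \<in> carrier B" using a(1) A_sub(1) by blast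
    show "\<ominus>\<^bsub>dsum M B\<^esub> x \<in> (\<lambda>a. (f a, \<ominus>\<^bsub>B\<^esub> a)) ` A"
      using a aB A_sub(4) f_lin(1) f_neg
      by (auto simp: dsum_neg[OF M B] intro!: image_eqI[of _ _ "\<ominus>\<^bsub>B\<^esub> a"])
    show "ract (dsum M B) x r \<in> (\<lambda>a. (f a, \<ominus>\<^bsub>B\<^esub> a)) ` A" if "r \<in> carrier R" for r
      using a aB that A_sub(5) f_lin(3)
      by (auto simp: ract_neg[OF B] intro!: image_eqI[of _ _ "ract B a r"])
    show "x \<oplus>\<^bsub>dsum M B\<^esub> y \<in> (\<lambda>a. (f a, \<ominus>\<^bsub>B\<^esub> a)) ` A"
      if "y \<in> (\<lambda>a. (f a, \<ominus>\<^bsub>B\<^esub> a)) ` A" for y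
    proof -
      from that obtain b where b: "b \<in> A" "y = (f b, \<ominus>\<^bsub>B\<^esub> b)" by blast
      then show ?thesis
        using a aB A_sub(1,3) f_lin(2) B.minus_add[OF aB, of b]
        by (auto intro!: image_eqI[of _ _ "a \<oplus>\<^bsub>B\<^esub> b"])
    qed
  qed (use A_sub f_lin(1) f_zero in \<open>auto simp: B_neg_zero intro!: image_eqI[of _ _ "\<zero>\<^bsub>B\<^esub>"]\<close>)
qed

lemma pushout_along_submodule:
  fixes M :: "('r, 'm) rmod" and B :: "('r, 'b) rmod"
  assumes M: "right_module R M" and B: "right_module R B"
    and A: "right_submodule R A B" and f: "rlin_on R A B M f"
  obtains P :: "('r, ('m \<times> 'b) set) rmod" and \<iota> j
  where "right_module R P" "rhom R M P \<iota>" "inj_on \<iota> (carrier M)" "rhom R B P j"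
    "\<And>a. a \<in> A \<Longrightarrow> j a = \<iota> (f a)"
proof -
  interpret M: abelian_group M using M by (rule right_module_abelian_group)
  interpret B: abelian_group B using B by (rule right_module_abelian_group)
  define K where "K = (\<lambda>a. (f a, \<ominus>\<^bsub>B\<^esub> a)) ` A"
  interpret submodule_quotient R "dsum M B" K
    unfolding K_def using dsum_module[OF M B] neg_graph_submodule[OF M B A f]
    by unfold_locales
  define \<iota> where "\<iota> = (\<lambda>m. K +>\<^bsub>dsum M B\<^esub> (m, \<zero>\<^bsub>B\<^esub>))"
  define j where "j = (\<lambda>b. K +>\<^bsub>dsum M B\<^esub> (\<zero>\<^bsub>M\<^esub>, b))"
  have A_sub: "A \<subseteq> carrier B" "\<zero>\<^bsub>B\<^esub> \<in> A" "\<And>a. a \<in> A \<Longrightarrow> \<ominus>\<^bsub>B\<^esub> a \<in> A"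
    using A unfolding right_submodule_def by auto
  have f_closed: "\<And>a. a \<in> A \<Longrightarrow> f a \<in> carrier M"
    using f unfolding rlin_on_def by auto
  have "rhom R M (quotient_mod (dsum M B) K) \<iota>"
    using rhom_comp[OF dsum_inl_rhom[OF M B] quotient_projection_rhom] by (simp add: \<iota>_def o_def)
  moreover have "rhom R B (quotient_mod (dsum M B) K) j"
    using rhom_comp[OF dsum_inr_rhom[OF M B] quotient_projection_rhom] by (simp add: j_def o_def)
  moreover have "inj_on \<iota> (carrier M)"
  proof (rule inj_onI)
    fix m m' assume m: "m \<in> carrier M" "m' \<in> carrier M" "\<iota> m = \<iota> m'"
    then have "(m \<oplus>\<^bsub>M\<^esub> \<ominus>\<^bsub>M\<^esub> m', \<ominus>\<^bsub>B\<^esub> \<zero>\<^bsub>B\<^esub>) \<in> K"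
      by (simp add: \<iota>_def coset_eq_iff dsum_neg[OF M B] B.r_zero)
    then obtain a where "a \<in> A" "m \<oplus>\<^bsub>M\<^esub> \<ominus>\<^bsub>M\<^esub> m' = f a" "\<ominus>\<^bsub>B\<^esub> \<zero>\<^bsub>B\<^esub> = \<ominus>\<^bsub>B\<^esub> a"
      unfolding K_def by blast
    then have "m \<oplus>\<^bsub>M\<^esub> \<ominus>\<^bsub>M\<^esub> m' = \<zero>\<^bsub>M\<^esub>"
      using A_sub rlin_on_zero[OF B.abelian_group_axioms M.abelian_group_axioms f]
      by (metis B.minus_minus B.zero_closed subsetD)
    then show "m = m'"
      using m by (metis M.a_inv_closed M.add.inv_solve_right' M.l_zero M.minus_minus M.zero_closed)
  qed
  moreover have "j a = \<iota> (f a)" if a: "a \<in> A" for a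
  proof -
    have aB: "a \<in> carrier B" using a A_sub(1) by blast
    have "(\<zero>\<^bsub>M\<^esub>, a) \<oplus>\<^bsub>dsum M B\<^esub> \<ominus>\<^bsub>dsum M B\<^esub> (f a, \<zero>\<^bsub>B\<^esub>) = (f (\<ominus>\<^bsub>B\<^esub> a), \<ominus>\<^bsub>B\<^esub> (\<ominus>\<^bsub>B\<^esub> a))"
      using aB f_closed[OF a] A_sub
        rlin_on_neg[OF B.abelian_group_axioms M.abelian_group_axioms f A_sub(1,2) a A_sub(3)[OF a]]
      by (simp add: dsum_neg[OF M B] B.r_zero)
    also have "\<dots> \<in> K" unfolding K_def using A_sub(3)[OF a] by blast
    finally show ?thesis
      using aB f_closed[OF a] by (simp add: j_def \<iota>_def coset_eq_iff)
  qed
  ultimately show ?thesis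
    using that quotient_module by blast
qed

lemma retraction_of_mono_if_ppi:
  fixes M :: "('r, 'm) rmod" and P :: "('r, 'p) rmod"
  assumes M: "right_module R M" and P: "right_module R P"
    and \<iota>: "rhom R M P \<iota>" and \<iota>_inj: "inj_on \<iota> (carrier M)"
    and ppi: "pseudo_principally_injective R M (dsum M P)"
  obtains \<rho> where "rhom R P M \<rho>" "\<And>m. m \<in> carrier M \<Longrightarrow> \<rho> (\<iota> m) = m"
proof -
  interpret M: abelian_group M using M by (rule right_module_abelian_group)
  interpret P: abelian_group P using P by (rule right_module_abelian_group)
  have N: "right_module R (dsum M P)" using M P by (rule dsum_module)
  define g where "g = (\<lambda>y :: 'm \<times> 'p. (\<zero>\<^bsub>M\<^esub>, \<iota> (fst y)))"
  have g: "rhom R (dsum M P) (dsum M P) g"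
    using \<iota> unfolding rhom_def rlin_on_def g_def by (auto simp: ract_zero[OF M])
  have image_g: "g ` carrier (dsum M P) = (\<lambda>m. (\<zero>\<^bsub>M\<^esub>, \<iota> m)) ` carrier M"
    unfolding g_def by (force intro!: image_eqI[where x="(_, \<zero>\<^bsub>P\<^esub>)"])
  define \<phi> where "\<phi> = (\<lambda>y :: 'm \<times> 'p. inv_into (carrier M) \<iota> (snd y))"
  have \<phi>: "\<And>m. m \<in> carrier M \<Longrightarrow> \<phi> (\<zero>\<^bsub>M\<^esub>, \<iota> m) = m"
    unfolding \<phi>_def using \<iota>_inj by simp
  have "rlin_on R (g ` carrier (dsum M P)) (dsum M P) M \<phi>"
    using \<iota> unfolding image_g rhom_def rlin_on_def
    by (auto simp: \<phi> ract_zero[OF M]) (metis \<phi> M.a_closed, metis \<phi> ract_closed[OF M])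
  moreover have "inj_on \<phi> (g ` carrier (dsum M P))"
    unfolding image_g by (rule inj_onI) (auto simp: \<phi>)
  moreover have "right_submodule R (g ` carrier (dsum M P)) (dsum M P)"
    using N N g by (rule rhom_image_submodule)
  ultimately obtain h where h: "rhom R (dsum M P) M h"
    "\<And>y. y \<in> g ` carrier (dsum M P) \<Longrightarrow> h y = \<phi> y"
    using ppi g unfolding pseudo_principally_injective_def N_cyclic_def by metis
  show ?thesis
  proof
    show "rhom R P M (h \<circ> (\<lambda>p. (\<zero>\<^bsub>M\<^esub>, p)))"
      using dsum_inr_rhom[OF M P] h(1) by (rule rhom_comp)
    show "(h \<circ> (\<lambda>p. (\<zero>\<^bsub>M\<^esub>, p))) (\<iota> m) = m" if "m \<in> carrier M" for m
      using that h(2) \<phi> unfolding image_g by auto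
  qed
qed

lemma injective_if_ppi_all:
  fixes M :: "('r, 'm) rmod"
  assumes M: "right_module R M" and ppi: "ppi_all R M TYPE('m \<times> ('m \<times> 'b) set)"
  shows "injective_mod R M TYPE('b)"
  unfolding injective_mod_def
proof (intro allI impI)
  fix B :: "('r, 'b) rmod" and A f
  assume B: "right_module R B" and A: "right_submodule R A B" and f: "rlin_on R A B M f"
  obtain P :: "('r, ('m \<times> 'b) set) rmod" and \<iota> j where P: "right_module R P"
    and \<iota>: "rhom R M P \<iota>" "inj_on \<iota> (carrier M)" and j: "rhom R B P j"
    and j_ext: "\<And>a. a \<in> A \<Longrightarrow> j a = \<iota> (f a)"
    using pushout_along_submodule[OF M B A f] by blast
  have "pseudo_principally_injective R M (dsum M P)"
    using ppi dsum_module[OF M P] unfolding ppi_all_def by blast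
  then obtain \<rho> where \<rho>: "rhom R P M \<rho>" "\<And>m. m \<in> carrier M \<Longrightarrow> \<rho> (\<iota> m) = m"
    using retraction_of_mono_if_ppi[OF M P \<iota>] by blast
  have "\<forall>a\<in>A. (\<rho> \<circ> j) a = f a"
    using j_ext \<rho>(2) f unfolding rlin_on_def by simp
  then show "\<exists>h. rhom R B M h \<and> (\<forall>a\<in>A. h a = f a)"
    using rhom_comp[OF j \<rho>(1)] by blast
qed

theorem proposition2p12:
  fixes R :: "('r, 'c) ring_scheme" and M :: "('r, 'm) rmod"
  assumes "ring R" and "right_module R M"
  shows "(injective_mod R M TYPE('n) \<longrightarrow> ppi_all R M TYPE('n)) \<and>
         (ppi_all R M TYPE('m \<times> ('m \<times> 'b) set) \<longrightarrow> injective_mod R M TYPE('b))"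
proof (intro conjI impI)
  show "injective_mod R M TYPE('n) \<Longrightarrow> ppi_all R M TYPE('n)"
    unfolding injective_mod_def ppi_all_def pseudo_principally_injective_def by blast
  show "ppi_all R M TYPE('m \<times> ('m \<times> 'b) set) \<Longrightarrow> injective_mod R M TYPE('b)"
    using assms(2) by (rule injective_if_ppi_all)
qed

end
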